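(* Let $\mathcal A^{\times}=\mathcal D_x\otimes\mathcal D_y-\mathcal G_x\otimes\mathcal G_y$ be the two-dimensional collocation matrix for the multiplicative kernel (see context). Then $\mathcal A^{\times}$ is strictly diagonally dominant by rows.
   Context: Fix $\gamma\in(0,1)$. For an interval $[\alpha,\beta]$ and an integer $m\ge2$ let $h=(\beta-\alpha)/m$, $x_s=\alpha+sh$ ($s\in\{0,\tfrac12,\dots,m\}$), and let $\phi_{s}$ be the piecewise quadratic Lagrange basis: for integers $0\le l\le m$, $\phi_l(x)=\frac{x-x_{l-1}}{h}\cdot\frac{2x-(x_l+x_{l-1})}{h}$ on $[x_{l-1},x_l]\cap[\alpha,\beta]$, $\phi_l(x)=\frac{x_{l+1}-x}{h}\cdot\frac{(x_{l+1}+x_l)-2x}{h}$ on $[x_l,x_{l+1}]\cap[\alpha,\beta]$, $0$ otherwise; for $l=1,\dots,m$, $\phi_{l-\frac12}(x)=\frac{4(x-x_{l-1})(x_l-x)}{h^2}$ on $[x_{l-1},x_l]$, $0$ otherwise. The associated 1D matrices are $\mathcal D=\mathrm{diag}(d_1,\dots,d_{2m-1})$ and $\mathcal G=(g_{ij})_{i,j=1}^{2m-1}$ with $d_i=\int_\alpha^\beta|x_{i/2}-y|^{-\gamma}dy$ and $g_{ij}=\int_\alpha^\beta\phi_{j/2}(y)|x_{i/2}-y|^{-\gamma}dy$. The following fact, established in earlier work, may be used: all $g_{ij}>0$ and $\mathcal D-\mathcal G$ is strictly diagonally dominant by rows. For $a<b$, $c<d$, $M_x,M_y\ge2$: $\mathcal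 D_x,\mathcal G_x$ are these matrices for $[a,b]$, $m=M_x$, and $\mathcal D_y,\mathcal G_y$ for $[c,d]$, $m=M_y$. Then $\mathcal A^{\times}=\mathcal D_x\otimes\mathcal D_y-\mathcal G_x\otimes\mathcal G_y$, which is the collocation matrix of $u\mapsto\int_\Omega\frac{u(x,y)-u(\bar x,\bar y)}{|x-\bar x|^\gamma|y-\bar y|^\gamma}d\bar xd\bar y$ on $\Omega=(a,b)\times(c,d)$ with tensor-product piecewise quadratic interpolation, rows/columns indexed by pairs $(i,j)\in\{1,\dots,2M_x-1\}\times\{1,\dots,2M_y-1\}$. *)

theory Defs
  imports "HOL-Analysis.Analysis"
begin

(* mesh size h = (beta - alpha)/m and nodes x_s = alpha + s*h, s real (s in {0,1/2,...,m}) *)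
definition mesh :: "real \<Rightarrow> real \<Rightarrow> nat \<Rightarrow> real" where
  "mesh \<alpha> \<beta> m = (\<beta> - \<alpha>) / real m"

definition node :: "real \<Rightarrow> real \<Rightarrow> nat \<Rightarrow> real \<Rightarrow> real" where
  "node \<alpha> \<beta> m s = \<alpha> + s * mesh \<alpha> \<beta> m"

definition phi_int :: "real \<Rightarrow> real \<Rightarrow> nat \<Rightarrow> nat \<Rightarrow> real \<Rightarrow> real" where
  "phi_int \<alpha> \<beta> m l x =
    (let h = mesh \<alpha> \<beta> m; xl = node \<alpha> \<beta> m (real l);
         xm = node \<alpha> \<beta> m (real l - 1); xp = node \<alpha> \<beta> m (real l + 1) in
     if x \<in> {xm..xl} \<inter> {\<alpha>..\<beta>} then ((x - xm) / h) * ((2*x - (xl + xm)) / h)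
     else if x \<in> {xl..xp} \<inter> {\<alpha>..\<beta>} then ((xp - x) / h) * (((xp + xl) - 2*x) / h)
     else 0)"

(* half-integer-indexed basis function phi_{l-1/2}, l = 1..m *)
definition phi_half :: "real \<Rightarrow> real \<Rightarrow> nat \<Rightarrow> nat \<Rightarrow> real \<Rightarrow> real" where
  "phi_half \<alpha> \<beta> m l x =
    (let h = mesh \<alpha> \<beta> m; xl = node \<alpha> \<beta> m (real l);
         xm = node \<alpha> \<beta> m (real l - 1) in
     if x \<in> {xm..xl} then 4 * (x - xm) * (xl - x) / h^2 else 0)"

(* phi_{j/2}: j even gives phi_{j div 2}, j odd gives phi_{(j+1)/2 - 1/2} *)
definition phi :: "real \<Rightarrow> real \<Rightarrow> nat \<Rightarrow> nat \<Rightarrow> real \<Rightarrow> real" where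
  "phi \<alpha> \<beta> m j = (if even j then phi_int \<alpha> \<beta> m (j div 2) else phi_half \<alpha> \<beta> m ((j + 1) div 2))"

definition dval :: "real \<Rightarrow> real \<Rightarrow> real \<Rightarrow> nat \<Rightarrow> nat \<Rightarrow> real" where
  "dval \<gamma> \<alpha> \<beta> m i =
     integral {\<alpha>..\<beta>} (\<lambda>y. \<bar>node \<alpha> \<beta> m (real i / 2) - y\<bar> powr (-\<gamma>))"

definition Dmat :: "real \<Rightarrow> real \<Rightarrow> real \<Rightarrow> nat \<Rightarrow> nat \<Rightarrow> nat \<Rightarrow> real" where
  "Dmat \<gamma> \<alpha> \<beta> m i j = (if i = j then dval \<gamma> \<alpha> \<beta> m i else 0)"

definition Gmat :: "real \<Rightarrow> real \<Rightarrow> real \<Rightarrow> nat \<Rightarrow> nat \<Rightarrow> nat \<Rightarrow> real" where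
  "Gmat \<gamma> \<alpha> \<beta> m i j =
     integral {\<alpha>..\<beta>} (\<lambda>y. phi \<alpha> \<beta> m j y * \<bar>node \<alpha> \<beta> m (real i / 2) - y\<bar> powr (-\<gamma>))"

definition sdd_rows :: "'i set \<Rightarrow> ('i \<Rightarrow> 'i \<Rightarrow> real) \<Rightarrow> bool" where
  "sdd_rows I A \<longleftrightarrow> (\<forall>p\<in>I. (\<Sum>q\<in>I - {p}. \<bar>A p q\<bar>) < \<bar>A p p\<bar>)"

definition idx :: "nat \<Rightarrow> nat set" where
  "idx m = {1..2*m - 1}"

(* A^x = D_x (x) D_y - G_x (x) G_y, rows/columns indexed by pairs (i,j) *)
definition Amult :: "real \<Rightarrow> real \<Rightarrow> real \<Rightarrow> real \<Rightarrow> real \<Rightarrow> nat \<Rightarrow> nat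
    \<Rightarrow> nat \<times> nat \<Rightarrow> nat \<times> nat \<Rightarrow> real" where
  "Amult \<gamma> a b c d Mx My p q =
     Dmat \<gamma> a b Mx (fst p) (fst q) * Dmat \<gamma> c d My (snd p) (snd q)
     - Gmat \<gamma> a b Mx (fst p) (fst q) * Gmat \<gamma> c d My (snd p) (snd q)"

end

theory Submission
  imports Defs
begin

text \<open>In one dimension, strict diagonal dominance of \<open>D - G\<close> with \<open>G > 0\<close>, together with
  \<open>g_ii \<le> d_i\<close> (the basis functions are bounded by 1 and the kernel is integrable), gives
  the full row-sum bound \<open>\<Sum>_k g_ik < d_i\<close>. Off the diagonal \<open>D_x \<otimes> D_y\<close> vanishes, so the
  off-diagonal row sum of \<open>A\<close> at \<open>(i, j)\<close> is
  \<open>(\<Sum>_k g^x_ik)(\<Sum>_l g^y_jl) - g^x_ii g^y_jj < d^x_i d^y_j - g^x_ii g^y_jj\<close>, the diagonal entry.\<close>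

lemma phi_int_le_1:
  assumes "\<alpha> < \<beta>" "0 < m"
  shows "phi_int \<alpha> \<beta> m l x \<le> 1"
proof -
  define h where "h = mesh \<alpha> \<beta> m"
  define xl where "xl = node \<alpha> \<beta> m (real l)"
  have h: "0 < h" using assms by (simp add: h_def mesh_def)
  have neighbours: "node \<alpha> \<beta> m (real l - 1) = xl - h" "node \<alpha> \<beta> m (real l + 1) = xl + h"
    by (simp_all add: xl_def h_def node_def algebra_simps)
  have quadratic: "t * (2 * t - 1) \<le> 1" if "0 \<le> t" "t \<le> 1" for t :: real
    using that by (smt (verit) mult_le_one mult_nonneg_nonpos)
  have left: "(x - (xl - h)) / h * ((2 * x - (xl + (xl - h))) / h) \<le> 1" if "x \<in> {xl - h..xl}"
    using quadratic[of "(x - (xl - h)) / h"] that h by (simp add: field_simps)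
  have right: "((xl + h) - x) / h * (((xl + h) + xl - 2 * x) / h) \<le> 1" if "x \<in> {xl..xl + h}"
    using quadratic[of "((xl + h) - x) / h"] that h by (simp add: field_simps)
  show ?thesis
    unfolding phi_int_def Let_def neighbours h_def[symmetric] xl_def[symmetric]
    using left right by auto
qed

lemma phi_half_le_1:
  assumes "\<alpha> < \<beta>" "0 < m"
  shows "phi_half \<alpha> \<beta> m l x \<le> 1"
proof -
  define h where "h = mesh \<alpha> \<beta> m"
  define xl where "xl = node \<alpha> \<beta> m (real l)"
  have h: "0 < h" using assms by (simp add: h_def mesh_def)
  have left: "node \<alpha> \<beta> m (real l - 1) = xl - h"
    by (simp add: xl_def h_def node_def algebra_simps)
  have "4 * (x - (xl - h)) * (xl - x) = h\<^sup>2 - (2 * x - 2 * xl + h)\<^sup>2"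
    by (simp add: power2_eq_square algebra_simps)
  then have "4 * (x - (xl - h)) * (xl - x) \<le> h\<^sup>2" by simp
  then show ?thesis
    unfolding phi_half_def Let_def left h_def[symmetric] xl_def[symmetric]
    using h by (simp add: field_simps)
qed

lemma phi_le_1: "\<alpha> < \<beta> \<Longrightarrow> 0 < m \<Longrightarrow> phi \<alpha> \<beta> m j x \<le> 1"
  by (simp add: phi_def phi_int_le_1 phi_half_le_1)

lemma integrable_on_abs_diff_powr:
  fixes x0 \<alpha> \<beta> a :: real
  assumes "-1 < a" "\<alpha> \<le> x0" "x0 \<le> \<beta>"
  shows "(\<lambda>y. \<bar>x0 - y\<bar> powr a) integrable_on {\<alpha>..\<beta>}"
proof (rule Henstock_Kurzweil_Integration.integrable_combine[where c = x0])
  show "\<alpha> \<le> x0" "x0 \<le> \<beta>" using assms by auto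
  have "(\<lambda>t. t powr a) integrable_on cbox 0 (x0 - \<alpha>)"
    using integrable_on_powr_from_0[of a "x0 - \<alpha>"] assms by simp
  from integrable_affinity[OF this, of "-1" x0]
  have "(\<lambda>y. (- y + x0) powr a) integrable_on {\<alpha>..x0}"
    using assms by simp
  then show "(\<lambda>y. \<bar>x0 - y\<bar> powr a) integrable_on {\<alpha>..x0}"
    by (rule integrable_eq) auto
  have "(\<lambda>t. t powr a) integrable_on cbox 0 (\<beta> - x0)"
    using integrable_on_powr_from_0[of a "\<beta> - x0"] assms by simp
  from integrable_affinity[OF this, of 1 "-x0"]
  have "(\<lambda>y. (y - x0) powr a) integrable_on {x0..\<beta>}"
    using assms by simp
  then show "(\<lambda>y. \<bar>x0 - y\<bar> powr a) integrable_on {x0..\<beta>}"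
    by (rule integrable_eq) auto
qed

lemma node_mem_interval:
  assumes "\<alpha> < \<beta>" "0 < m" "0 \<le> s" "s \<le> real m"
  shows "node \<alpha> \<beta> m s \<in> {\<alpha>..\<beta>}"
proof -
  have "s * ((\<beta> - \<alpha>) / real m) \<le> real m * ((\<beta> - \<alpha>) / real m)"
    using assms by (intro mult_right_mono) auto
  then show ?thesis using assms by (simp add: node_def mesh_def)
qed

lemma Gmat_le_dval:
  assumes "\<gamma> < 1" "\<alpha> < \<beta>" "0 < m" "i \<le> 2 * m"
  shows "Gmat \<gamma> \<alpha> \<beta> m i j \<le> dval \<gamma> \<alpha> \<beta> m i"
proof -
  define w where "w = (\<lambda>y. \<bar>node \<alpha> \<beta> m (real i / 2) - y\<bar> powr (-\<gamma>))"
  have "node \<alpha> \<beta> m (real i / 2) \<in> {\<alpha>..\<beta>}"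
    using assms by (intro node_mem_interval) auto
  then have w: "w integrable_on {\<alpha>..\<beta>}"
    unfolding w_def using assms(1) by (intro integrable_on_abs_diff_powr) auto
  show ?thesis
  proof (cases "(\<lambda>y. phi \<alpha> \<beta> m j y * w y) integrable_on {\<alpha>..\<beta>}")
    case True
    have "phi \<alpha> \<beta> m j y * w y \<le> w y" for y
      using phi_le_1[OF assms(2,3)] mult_right_mono[of _ 1 "w y"] by (simp add: w_def)
    then show ?thesis
      using integral_le[OF True w] by (simp add: Gmat_def dval_def w_def)
  next
    case False
    \<comment> \<open>the Henstock-Kurzweil integral of a non-integrable function is 0\<close>
    then have "Gmat \<gamma> \<alpha> \<beta> m i j = 0"
      unfolding Gmat_def w_def by (rule not_integrable_integral)
    moreover have "0 \<le> dval \<gamma> \<alpha> \<beta> m i"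
      using integral_nonneg[OF w] by (simp add: dval_def w_def)
    ultimately show ?thesis by simp
  qed
qed

lemma row_sum_lt_diag_if_sdd_rows:
  fixes D G :: "'i \<Rightarrow> 'i \<Rightarrow> real"
  assumes "finite I" "sdd_rows I (\<lambda>i k. D i k - G i k)" "i \<in> I"
    and "\<forall>k\<in>I - {i}. D i k = 0" "\<forall>k\<in>I. 0 \<le> G i k" "G i i \<le> D i i"
  shows "(\<Sum>k\<in>I. G i k) < D i i"
proof -
  have "(\<Sum>k\<in>I - {i}. \<bar>D i k - G i k\<bar>) = (\<Sum>k\<in>I - {i}. G i k)"
    using assms(4,5) by (intro sum.cong) auto
  moreover have "(\<Sum>k\<in>I - {i}. \<bar>D i k - G i k\<bar>) < \<bar>D i i - G i i\<bar>"
    using assms(2,3) unfolding sdd_rows_def by blast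
  moreover have "(\<Sum>k\<in>I. G i k) = G i i + (\<Sum>k\<in>I - {i}. G i k)"
    using sum.remove[OF assms(1,3)] .
  ultimately show ?thesis using assms(6) by simp
qed

lemma sdd_rows_diag_tensor_diff:
  fixes D1 G1 :: "'i \<Rightarrow> 'i \<Rightarrow> real" and D2 G2 :: "'j \<Rightarrow> 'j \<Rightarrow> real"
  assumes "finite I" "finite J"
    and diag1: "\<forall>i\<in>I. \<forall>k\<in>I. i \<noteq> k \<longrightarrow> D1 i k = 0"
    and diag2: "\<forall>j\<in>J. \<forall>l\<in>J. j \<noteq> l \<longrightarrow> D2 j l = 0"
    and nonneg1: "\<forall>i\<in>I. \<forall>k\<in>I. 0 \<le> G1 i k"
    and nonneg2: "\<forall>j\<in>J. \<forall>l\<in>J. 0 \<le> G2 j l"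
    and rows1: "\<forall>i\<in>I. (\<Sum>k\<in>I. G1 i k) < D1 i i"
    and rows2: "\<forall>j\<in>J. (\<Sum>l\<in>J. G2 j l) < D2 j j"
  shows "sdd_rows (I \<times> J)
    (\<lambda>p q. D1 (fst p) (fst q) * D2 (snd p) (snd q) - G1 (fst p) (fst q) * G2 (snd p) (snd q))"
proof -
  have "(\<Sum>(k, l)\<in>I \<times> J - {(i, j)}. \<bar>D1 i k * D2 j l - G1 i k * G2 j l\<bar>)
      < \<bar>D1 i i * D2 j j - G1 i i * G2 j j\<bar>" if i: "i \<in> I" and j: "j \<in> J" for i j
  proof -
    define g where "g = (\<lambda>q. G1 i (fst q) * G2 j (snd q))"
    have off_diag: "\<bar>D1 i k * D2 j l - G1 i k * G2 j l\<bar> = g (k, l)"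
      if "(k, l) \<in> I \<times> J - {(i, j)}" for k l
      using that i j diag1 diag2 nonneg1 nonneg2 by (auto simp: g_def)
    have "(\<Sum>(k, l)\<in>I \<times> J - {(i, j)}. \<bar>D1 i k * D2 j l - G1 i k * G2 j l\<bar>)
        = (\<Sum>q\<in>I \<times> J - {(i, j)}. g q)"
      using off_diag by (intro sum.cong) auto
    also have "\<dots> = (\<Sum>q\<in>I \<times> J. g q) - g (i, j)"
      using i j assms(1,2) by (simp add: sum_diff1)
    also have "(\<Sum>q\<in>I \<times> J. g q) = (\<Sum>k\<in>I. G1 i k) * (\<Sum>l\<in>J. G2 j l)"
      by (simp add: g_def sum_product sum.cartesian_product split_def)
    also have "\<dots> < D1 i i * D2 j j"
    proof (rule mult_strict_mono)
      show "0 < D1 i i"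
        using rows1 nonneg1 i by (smt (verit) sum_nonneg)
      show "0 \<le> (\<Sum>l\<in>J. G2 j l)"
        using nonneg2 j by (simp add: sum_nonneg)
    qed (use rows1 rows2 i j in auto)
    finally show ?thesis by (simp add: g_def)
  qed
  then show ?thesis
    unfolding sdd_rows_def by (auto simp: split_def)
qed

lemma Gmat_row_sum_lt_dval:
  assumes "\<gamma> < 1" "\<alpha> < \<beta>" "0 < m"
    and "\<forall>i\<in>idx m. \<forall>j\<in>idx m. 0 < Gmat \<gamma> \<alpha> \<beta> m i j"
    and "sdd_rows (idx m) (\<lambda>i j. Dmat \<gamma> \<alpha> \<beta> m i j - Gmat \<gamma> \<alpha> \<beta> m i j)"
    and i: "i \<in> idx m"
  shows "(\<Sum>k\<in>idx m. Gmat \<gamma> \<alpha> \<beta> m i k) < Dmat \<gamma> \<alpha> \<beta> m i i"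
proof (rule row_sum_lt_diag_if_sdd_rows[OF _ assms(5) i])
  have "i \<le> 2 * m" using i by (auto simp: idx_def)
  then show "Gmat \<gamma> \<alpha> \<beta> m i i \<le> Dmat \<gamma> \<alpha> \<beta> m i i"
    using Gmat_le_dval[OF assms(1-3)] by (simp add: Dmat_def)
qed (use assms(4) i in \<open>auto simp: idx_def Dmat_def less_imp_le\<close>)

theorem lemma3p8:
  fixes \<gamma> a b c d :: real and Mx My :: nat
  assumes "0 < \<gamma>" "\<gamma> < 1" "a < b" "c < d" "2 \<le> Mx" "2 \<le> My"
    and gx_pos: "\<forall>i\<in>idx Mx. \<forall>j\<in>idx Mx. 0 < Gmat \<gamma> a b Mx i j"
    and gy_pos: "\<forall>i\<in>idx My. \<forall>j\<in>idx My. 0 < Gmat \<gamma> c d My i j"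
    and sdd_x: "sdd_rows (idx Mx) (\<lambda>i j. Dmat \<gamma> a b Mx i j - Gmat \<gamma> a b Mx i j)"
    and sdd_y: "sdd_rows (idx My) (\<lambda>i j. Dmat \<gamma> c d My i j - Gmat \<gamma> c d My i j)"
  shows "sdd_rows (idx Mx \<times> idx My) (Amult \<gamma> a b c d Mx My)"
proof -
  have "Amult \<gamma> a b c d Mx My = (\<lambda>p q.
      Dmat \<gamma> a b Mx (fst p) (fst q) * Dmat \<gamma> c d My (snd p) (snd q)
      - Gmat \<gamma> a b Mx (fst p) (fst q) * Gmat \<gamma> c d My (snd p) (snd q))"
    by (simp add: Amult_def fun_eq_iff)
  moreover have "sdd_rows (idx Mx \<times> idx My) \<dots>"
  proof (rule sdd_rows_diag_tensor_diff)
    show "\<forall>i\<in>idx Mx. (\<Sum>k\<in>idx Mx. Gmat \<gamma> a b Mx i k) < Dmat \<gamma> a b Mx i i"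
      using Gmat_row_sum_lt_dval[OF assms(2,3) _ gx_pos sdd_x] assms(5) by simp
    show "\<forall>j\<in>idx My. (\<Sum>l\<in>idx My. Gmat \<gamma> c d My j l) < Dmat \<gamma> c d My j j"
      using Gmat_row_sum_lt_dval[OF assms(2,4) _ gy_pos sdd_y] assms(6) by simp
  qed (use gx_pos gy_pos in \<open>auto simp: idx_def Dmat_def less_imp_le\<close>)
  ultimately show ?thesis by simp
qed

end
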